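(* Let $n\ge1$ and let $\Sigma\subset\mathbb R^{n+1}$ be a closed set which is parabolic ADR with constant $M$ and which satisfies the (two-sided) corkscrew condition with constant $\gamma_0\in(0,1)$. Assume in addition that $\Sigma$ is parabolic uniformly rectifiable with constants $(M,\tilde M)$. Then $\Sigma$ satisfies the weak time-synchronized two cube condition with a constant $\gamma_1\in(0,1)$ depending only on $n,M,\gamma_0,\tilde M$.
   Context: Points of $\mathbb R^{n+1}$ are written $(X,t)$, $X\in\mathbb R^n$, $t\in\mathbb R$. Parabolic distance: $d_p((X,t),(Y,s))=|X-Y|+|t-s|^{1/2}$; diameters and distances are measured in this metric. Parabolic cube: $Q_r(X,t)=\{(Y,s): |y_i-x_i|<r,\ i=1,\dots,n,\ |t-s|<r^2\}$. $\mathcal H^{n+1}_p$ is the $(n+1)$-dimensional Hausdorff measure built with $d_p$-diameters; for closed $\Sigma$, $\sigma=\mathcal H^{n+1}_p$ restricted to $\Sigma$, $\Delta(X,t,r)=\Sigma\cap Q_r(X,t)$, $T_0$ and $T_1$ are the infimum and supremum of time coordinates of points of $\Sigma$. Parabolic ADR with constant $M$: $M^{-1}r^{n+1}\le\sigma(\Delta(X,t,r))\le Mr^{n+1}$ for $(X,t)\in\Sigma$, $T_0<t<T_1$, $0<r<\operatorname{diam}\Sigma$. Parabolic uniform rectifiability with constants $(M,\tilde M)$: $\Sigma$ is parabolic ADR with constant $M$ and, setting $\beta(Z,\tau,r)=\inf_P\big(r^{-n-1}\iint_{\Delta(Z,\tau,r)}(d_p((Y,s),P)/r)^2\,d\sigma(Y,s)\big)^{1/2}$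 (infimum over $n$-dimensional planes $P$ containing a line parallel to the $t$-axis) and $d\nu(Z,\tau,r)=\beta^2(Z,\tau,r)\,d\sigma(Z,\tau)\,r^{-1}dr$, one has $\sup_{(X,t)\in\Sigma,\rho>0}\rho^{-n-1}\nu(\Delta(X,t,\rho)\times(0,\rho))\le\tilde M$. Corkscrew condition with constant $\gamma_0\in(0,1)$: for all $(X,t)\in\Sigma$ with $T_0<t<T_1$ and $0<r<\operatorname{diam}\Sigma$ there are parabolic cubes $Q_\rho(X_1,t_1),Q_\rho(X_2,t_2)\subset Q_r(X,t)$ with $\gamma_0r\le\rho<r$ such that $Q_\rho(X_i,t_i)\cap(\mathbb R^n\times(T_0,T_1))$, $i=1,2$, lie in different connected components of $\mathbb R^{n+1}\setminus\Sigma$. Weak time-synchronized two cube condition with constant $\gamma_1$: the same with $\gamma_1$ in place of $\gamma_0$ and additionally $t_1=t_2$. *)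

theory Defs
  imports "HOL-Analysis.Analysis"
begin

text \<open>Points of R^(n+1) are pairs (X,t) with X :: real^'n (n = CARD('n) >= 1) and t :: real.\<close>

type_synonym 'n ppoint = "(real ^ 'n) \<times> real"

definition pdist :: "'n::finite ppoint \<Rightarrow> 'n ppoint \<Rightarrow> real" where
  "pdist p q = norm (fst p - fst q) + sqrt \<bar>snd p - snd q\<bar>"

text \<open>Parabolic diameter (in the extended nonnegative reals; 0 for the empty set).\<close>
definition pdiam :: "'n::finite ppoint set \<Rightarrow> ennreal" where
  "pdiam A = (SUP p\<in>A. SUP q\<in>A. ennreal (pdist p q))"

definition pcube :: "real \<Rightarrow> 'n::finite ppoint \<Rightarrow> 'n ppoint set" where
  "pcube r p = {q. (\<forall>i. \<bar>fst q $ i - fst p $ i\<bar> < r) \<and> \<bar>snd p - snd q\<bar> < r\<^sup>2}"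

definition phaus_delta :: "nat \<Rightarrow> real \<Rightarrow> 'n::finite ppoint set \<Rightarrow> ennreal" where
  "phaus_delta s \<delta> A = (INF C\<in>{C :: nat \<Rightarrow> 'n ppoint set.
       A \<subseteq> (\<Union>i. C i) \<and> (\<forall>i. pdiam (C i) \<le> ennreal \<delta>)}. (\<Sum>i. pdiam (C i) ^ s))"

definition phaus :: "nat \<Rightarrow> 'n::finite ppoint set \<Rightarrow> ennreal" where
  "phaus s A = (SUP \<delta>\<in>{0<..}. phaus_delta s \<delta> A)"

definition psigma :: "'n::finite ppoint set \<Rightarrow> 'n ppoint measure" where
  "psigma S = measure_of UNIV (sets borel) (\<lambda>A. phaus (CARD('n) + 1) (A \<inter> S))"

definition T0 :: "'n::finite ppoint set \<Rightarrow> ereal" where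
  "T0 S = Inf ((\<lambda>p. ereal (snd p)) ` S)"

definition T1 :: "'n::finite ppoint set \<Rightarrow> ereal" where
  "T1 S = Sup ((\<lambda>p. ereal (snd p)) ` S)"

definition in_time_range :: "'n::finite ppoint set \<Rightarrow> real \<Rightarrow> bool" where
  "in_time_range S t \<longleftrightarrow> T0 S < ereal t \<and> ereal t < T1 S"

definition parabolic_ADR :: "real \<Rightarrow> 'n::finite ppoint set \<Rightarrow> bool" where
  "parabolic_ADR M S \<longleftrightarrow>
     (\<forall>p\<in>S. \<forall>r. in_time_range S (snd p) \<and> 0 < r \<and> ennreal r < pdiam S \<longrightarrow>
        ennreal (r ^ (CARD('n) + 1) / M) \<le> phaus (CARD('n) + 1) (S \<inter> pcube r p) \<and>
        phaus (CARD('n) + 1) (S \<inter> pcube r p) \<le> ennreal (M * r ^ (CARD('n) + 1)))"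

definition time_planes :: "'n::finite ppoint set set" where
  "time_planes = {P. affine P \<and> P \<noteq> {} \<and> aff_dim P = int CARD('n) \<and>
                     (\<forall>q\<in>P. \<forall>c::real. (fst q, snd q + c) \<in> P)}"

definition pdist_set :: "'n::finite ppoint \<Rightarrow> 'n ppoint set \<Rightarrow> real" where
  "pdist_set q P = Inf (pdist q ` P)"

definition beta_sq :: "'n::finite ppoint set \<Rightarrow> 'n ppoint \<Rightarrow> real \<Rightarrow> ennreal" where
  "beta_sq S z r = (INF P\<in>time_planes.
      ennreal (1 / r ^ (CARD('n) + 1)) *
      (\<integral>\<^sup>+ q\<in>(S \<inter> pcube r z). ennreal ((pdist_set q P / r)\<^sup>2) \<partial>psigma S))"

text \<open>nu(Delta(X,t,rho) x (0,rho)) for d nu = beta^2 d sigma r^{-1} dr.\<close>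
definition nu_box :: "'n::finite ppoint set \<Rightarrow> 'n ppoint \<Rightarrow> real \<Rightarrow> ennreal" where
  "nu_box S p \<rho> = (\<integral>\<^sup>+ z\<in>(S \<inter> pcube \<rho> p).
       (\<integral>\<^sup>+ r\<in>{0<..<\<rho>}. beta_sq S z r * ennreal (1 / r) \<partial>lborel) \<partial>psigma S)"

definition parabolic_UR :: "real \<Rightarrow> real \<Rightarrow> 'n::finite ppoint set \<Rightarrow> bool" where
  "parabolic_UR M Mt S \<longleftrightarrow> parabolic_ADR M S \<and>
     (\<forall>p\<in>S. \<forall>\<rho>>0. nu_box S p \<rho> \<le> ennreal (Mt * \<rho> ^ (CARD('n) + 1)))"

definition two_cube :: "bool \<Rightarrow> real \<Rightarrow> 'n::finite ppoint set \<Rightarrow> bool" where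
  "two_cube sync \<gamma> S \<longleftrightarrow>
     (\<forall>p\<in>S. \<forall>r. in_time_range S (snd p) \<and> 0 < r \<and> ennreal r < pdiam S \<longrightarrow>
        (\<exists>\<rho> p1 p2. \<gamma> * r \<le> \<rho> \<and> \<rho> < r \<and>
           pcube \<rho> p1 \<subseteq> pcube r p \<and> pcube \<rho> p2 \<subseteq> pcube r p \<and>
           (sync \<longrightarrow> snd p1 = snd p2) \<and>
           (\<exists>U1 U2. U1 \<in> components (- S) \<and> U2 \<in> components (- S) \<and> U1 \<noteq> U2 \<and>
              pcube \<rho> p1 \<inter> {q. in_time_range S (snd q)} \<subseteq> U1 \<and>
              pcube \<rho> p2 \<inter> {q. in_time_range S (snd q)} \<subseteq> U2)))"

definition corkscrew :: "real \<Rightarrow> 'n::finite ppoint set \<Rightarrow> bool" where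
  "corkscrew \<gamma> S \<longleftrightarrow> two_cube False \<gamma> S"

definition weak_ts_two_cube :: "real \<Rightarrow> 'n::finite ppoint set \<Rightarrow> bool" where
  "weak_ts_two_cube \<gamma> S \<longleftrightarrow> two_cube True \<gamma> S"

end

theory Submission
  imports Defs
begin

(*
  Fix p in Sigma, with time coordinate t, and a scale r.  If the interval [t - r^2/2, t + r^2/2]
  reaches T0 or T1, a cube of half size displaced in time by 3r^2/4 misses the time range
  (T0, T1), and the condition holds vacuously for it.

  Otherwise the Carleson bound on nu over Delta(p, r/2) x (0, r/2), against the logarithmic
  divergence of the integral of ds/s, gives a point z of Sigma near p and a scale s comparable
  to r with beta(z, s) small.  By the lower ADR bound, Sigma near z then lies in a thin slab
  |a.X - b| <= gamma0 s / 32 around a plane containing the time direction.  The corkscrew cubes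
  at (z, s/2) lie in different components of the complement, so they sit on opposite sides of
  the slab; as the slab is invariant under time translations, both cubes can be moved to the
  time of z, and shrunk by 4, without leaving their components.
*)

section \<open>The parabolic distance\<close>

lemma pdist_commute: "pdist p q = pdist q p"
  unfolding pdist_def by (simp add: norm_minus_commute abs_minus_commute)

lemma sqrt_abs_diff_triangle: "sqrt \<bar>a - c\<bar> \<le> sqrt \<bar>a - b\<bar> + sqrt \<bar>b - (c::real)\<bar>"
proof -
  have "\<bar>a - c\<bar> \<le> \<bar>a - b\<bar> + \<bar>b - c\<bar>" by simp
  also have "\<dots> \<le> (sqrt \<bar>a - b\<bar> + sqrt \<bar>b - c\<bar>)\<^sup>2"
    by (simp add: power2_sum)
  finally show ?thesis
    by (simp add: real_le_lsqrt)
qed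

lemma pdist_triangle: "pdist p r \<le> pdist p q + pdist q r"
proof -
  have "norm (fst p - fst r) \<le> norm (fst p - fst q) + norm (fst q - fst r)"
    using norm_triangle_ineq[of "fst p - fst q" "fst q - fst r"] by simp
  with sqrt_abs_diff_triangle[of "snd p" "snd r" "snd q"] show ?thesis
    unfolding pdist_def by linarith
qed

lemma pdiam_empty [simp]: "pdiam {} = 0"
  by (simp add: pdiam_def bot_ennreal)

lemma pdiam_mono: "A \<subseteq> B \<Longrightarrow> pdiam A \<le> pdiam B"
  unfolding pdiam_def by (intro SUP_subset_mono) auto

lemma pdist_le_pdiam: "p \<in> A \<Longrightarrow> q \<in> A \<Longrightarrow> ennreal (pdist p q) \<le> pdiam A"
  unfolding pdiam_def by (rule SUP_upper2[of p]) (auto intro: SUP_upper)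

lemma dist_less_of_pdist_less:
  assumes "pdist x q < e" "e \<le> 1"
  shows "dist x q < 2 * e"
proof -
  have "0 \<le> norm (fst x - fst q)" "0 \<le> sqrt \<bar>snd x - snd q\<bar>" by simp_all
  with assms(1) have X: "norm (fst x - fst q) < e" and t: "sqrt \<bar>snd x - snd q\<bar> < e"
    unfolding pdist_def by linarith+
  have "\<bar>snd x - snd q\<bar> = sqrt \<bar>snd x - snd q\<bar> * sqrt \<bar>snd x - snd q\<bar>" by simp
  also have "\<dots> \<le> sqrt \<bar>snd x - snd q\<bar>"
    using t assms(2) by (intro mult_left_le) (auto simp del: real_sqrt_le_1_iff)
  finally have "\<bar>snd x - snd q\<bar> < e" using t by linarith
  moreover have "dist x q \<le> dist (fst x) (fst q) + dist (snd x) (snd q)"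
    unfolding dist_prod_def by (intro sqrt_sum_squares_le_sum) auto
  ultimately show ?thesis using X by (simp add: dist_norm dist_real_def)
qed

lemma closed_imp_pdist_gap:
  assumes "closed F" "x \<notin> F"
  shows "\<exists>k::nat. \<forall>q\<in>F. 1 / real (Suc k) \<le> pdist x q"
proof -
  obtain e where e: "e > 0" "ball x e \<subseteq> - F"
    using assms open_contains_ball[of "- F"] by blast
  obtain k :: nat where k: "1 / real (Suc k) < min 1 (e/2)"
    using e(1) reals_Archimedean[of "min 1 (e/2)"] by (auto simp: inverse_eq_divide)
  have "1 / real (Suc k) \<le> pdist x q" if "q \<in> F" for q
  proof (rule ccontr)
    assume "\<not> ?thesis"
    then have "dist x q < e"
      using k dist_less_of_pdist_less[of x q "min 1 (e/2)"] by linarith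
    then show False using e(2) that by auto
  qed
  then show ?thesis by blast
qed

section \<open>The parabolic Hausdorff measure\<close>

lemma phaus_delta_mono: "A \<subseteq> B \<Longrightarrow> phaus_delta s d A \<le> phaus_delta s d B"
  unfolding phaus_delta_def by (intro INF_superset_mono) auto

lemma phaus_mono: "A \<subseteq> B \<Longrightarrow> phaus s A \<le> phaus s B"
  unfolding phaus_def by (intro SUP_mono) (auto intro: phaus_delta_mono)

lemma phaus_delta_antimono: "d \<le> d' \<Longrightarrow> phaus_delta s d' A \<le> phaus_delta s d A"
  unfolding phaus_delta_def by (intro INF_superset_mono) (auto intro: order_trans ennreal_leI)

lemma phaus_delta_le_phaus: "0 < d \<Longrightarrow> phaus_delta s d A \<le> phaus s A"
  unfolding phaus_def by (rule SUP_upper) auto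

lemma phaus_empty: "0 < s \<Longrightarrow> phaus s ({} :: 'n::finite ppoint set) = 0"
proof -
  assume "0 < s"
  then have "phaus_delta s d ({} :: 'n ppoint set) = 0" for d
    unfolding phaus_delta_def
    by (intro antisym INF_lower2[of "\<lambda>_. {}"]) (auto simp: zero_power)
  then show ?thesis by (simp add: phaus_def)
qed

lemma phaus_delta_subadd:
  fixes A :: "nat \<Rightarrow> 'n::finite ppoint set"
  shows "phaus_delta s d (\<Union>i. A i) \<le> (\<Sum>n. phaus_delta s d (A n))"
proof (rule ennreal_le_epsilon)
  fix e :: real assume e: "0 < e" "(\<Sum>n. phaus_delta s d (A n)) < top"
  let ?O = "phaus_delta s d"
  have "\<exists>B. (A n \<subseteq> (\<Union>i. B i) \<and> (\<forall>i. pdiam (B i) \<le> ennreal d)) \<and>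
      (\<Sum>i. pdiam (B i) ^ s) \<le> ?O (A n) + e * (1/2) ^ Suc n" for n
  proof -
    have "?O (A n) < ?O (A n) + e * (1/2) ^ Suc n"
      using e by (auto simp add: less_top dest!: ennreal_suminf_lessD)
    then obtain B where "B \<in> {C. A n \<subseteq> (\<Union>i. C i) \<and> (\<forall>i. pdiam (C i) \<le> ennreal d)}"
      "(\<Sum>i. pdiam (B i) ^ s) < ?O (A n) + e * (1/2) ^ Suc n"
      unfolding phaus_delta_def[of s d "A n"] INF_less_iff by blast
    then show ?thesis by (intro exI[of _ B]) auto
  qed
  then obtain B where cover: "\<And>n. A n \<subseteq> (\<Union>i. B n i)" and small: "\<And>n i. pdiam (B n i) \<le> ennreal d"
    and sum: "\<And>n. (\<Sum>i. pdiam (B n i) ^ s) \<le> ?O (A n) + e * (1/2) ^ Suc n"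
    by metis
  define C where "C = case_prod B o prod_decode"
  have "(\<Union>i. A i) \<subseteq> (\<Union>i. C i)"
    using cover by (auto simp add: C_def subset_eq) (metis prod.case prod_encode_inverse)
  then have "?O (\<Union>i. A i) \<le> (\<Sum>i. pdiam (C i) ^ s)"
    unfolding phaus_delta_def using small
    by (intro INF_lower) (auto simp: C_def split: prod.splits)
  also have "\<dots> = (\<Sum>n. \<Sum>i. pdiam (B n i) ^ s)"
    unfolding C_def comp_def by (intro suminf_ennreal_2dimen) auto
  also have "\<dots> \<le> (\<Sum>n. ?O (A n) + e * (1/2) ^ Suc n)"
    by (intro suminf_le allI sum) auto
  also have "\<dots> = (\<Sum>n. ?O (A n)) + (\<Sum>n. ennreal e * ennreal ((1/2) ^ Suc n))"
    using \<open>0 < e\<close> by (subst suminf_add[symmetric])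
      (auto simp del: ennreal_suminf_cmult simp add: ennreal_mult[symmetric])
  also have "\<dots> = (\<Sum>n. ?O (A n)) + e"
    unfolding ennreal_suminf_cmult
    by (subst suminf_ennreal_eq[OF zero_le_power power_half_series]) auto
  finally show "?O (\<Union>i. A i) \<le> (\<Sum>n. ?O (A n)) + e" .
qed

lemma phaus_subadd:
  fixes A :: "nat \<Rightarrow> 'n::finite ppoint set"
  shows "phaus s (\<Union>i. A i) \<le> (\<Sum>n. phaus s (A n))"
  unfolding phaus_def[of s "\<Union>i. A i"]
proof (rule SUP_least)
  fix d :: real assume "d \<in> {0<..}"
  then have "(\<Sum>n. phaus_delta s d (A n)) \<le> (\<Sum>n. phaus s (A n))"
    by (intro suminf_le allI phaus_delta_le_phaus) auto
  with phaus_delta_subadd show "phaus_delta s d (\<Union>i. A i) \<le> (\<Sum>n. phaus s (A n))"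
    by (rule order_trans)
qed

lemma phaus_Un_le:
  assumes "0 < s"
  shows "phaus s (A \<union> B) \<le> phaus s A + phaus s B"
proof -
  define F where "F = (\<lambda>i::nat. if i = 0 then A else if i = 1 then B else {})"
  have "A \<union> B = (\<Union>i. F i)" unfolding F_def by (auto split: if_splits)
  then have "phaus s (A \<union> B) \<le> (\<Sum>n. phaus s (F n))" using phaus_subadd[of s F] by simp
  also have "\<dots> = (\<Sum>n<2. phaus s (F n))"
    by (rule suminf_finite) (auto simp: F_def phaus_empty assms)
  also have "\<dots> = phaus s A + phaus s B" by (simp add: F_def numeral_2_eq_2)
  finally show ?thesis .
qed

definition psep :: "'n::finite ppoint set \<Rightarrow> 'n ppoint set \<Rightarrow> bool" where
  "psep A B \<longleftrightarrow> (\<exists>e>0. \<forall>a\<in>A. \<forall>b\<in>B. e \<le> pdist a b)"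

lemma phaus_delta_separated:
  fixes A B :: "'n::finite ppoint set"
  assumes "0 < s" "0 \<le> d" "\<forall>a\<in>A. \<forall>b\<in>B. d < pdist a b"
  shows "phaus_delta s d A + phaus_delta s d B \<le> phaus_delta s d (A \<union> B)"
  unfolding phaus_delta_def[of s d "A \<union> B"]
proof (rule INF_greatest)
  fix C :: "nat \<Rightarrow> 'n ppoint set"
  assume C: "C \<in> {C. A \<union> B \<subseteq> (\<Union>i. C i) \<and> (\<forall>i. pdiam (C i) \<le> ennreal d)}"
  have split: "pdiam (C i \<inter> A) ^ s + pdiam (C i \<inter> B) ^ s \<le> pdiam (C i) ^ s" for i
  proof (cases "C i \<inter> A = {} \<or> C i \<inter> B = {}")
    case True
    then show ?thesis using \<open>0 < s\<close> by (auto simp: zero_power intro!: power_mono pdiam_mono)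
  next
    case False
    then obtain a b where "a \<in> C i" "a \<in> A" "b \<in> C i" "b \<in> B" by blast
    then have "ennreal (pdist a b) \<le> ennreal d" "d < pdist a b"
      using C assms(3) pdist_le_pdiam[of a "C i" b] by (auto intro: order_trans)
    then show ?thesis using assms(2) by simp
  qed
  have "phaus_delta s d A + phaus_delta s d B
      \<le> (\<Sum>i. pdiam (C i \<inter> A) ^ s) + (\<Sum>i. pdiam (C i \<inter> B) ^ s)"
    unfolding phaus_delta_def using C
    by (intro add_mono INF_lower) (auto intro: order_trans[OF pdiam_mono])
  also have "\<dots> = (\<Sum>i. pdiam (C i \<inter> A) ^ s + pdiam (C i \<inter> B) ^ s)"
    by (rule suminf_add) auto
  also have "\<dots> \<le> (\<Sum>i. pdiam (C i) ^ s)"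
    by (intro suminf_le split) auto
  finally show "phaus_delta s d A + phaus_delta s d B \<le> (\<Sum>i. pdiam (C i) ^ s)" .
qed

lemma phaus_psep:
  assumes "0 < s" "psep A B"
  shows "phaus s (A \<union> B) = phaus s A + phaus s B"
proof (rule antisym)
  show "phaus s (A \<union> B) \<le> phaus s A + phaus s B"
    using phaus_Un_le[OF assms(1)] .
  obtain e where e: "e > 0" "\<forall>a\<in>A. \<forall>b\<in>B. e \<le> pdist a b"
    using assms(2) unfolding psep_def by auto
  have deltas: "phaus_delta s d1 A + phaus_delta s d2 B \<le> phaus s (A \<union> B)"
    if "d1 > 0" "d2 > 0" for d1 d2
  proof -
    define d where "d = min (e/2) (min d1 d2)"
    have d: "d > 0" "d \<le> d1" "d \<le> d2" "d < e" using that e by (auto simp: d_def)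
    have "phaus_delta s d1 A + phaus_delta s d2 B \<le> phaus_delta s d A + phaus_delta s d B"
      using d by (intro add_mono phaus_delta_antimono)
    also have "\<dots> \<le> phaus_delta s d (A \<union> B)"
      using d e by (intro phaus_delta_separated assms(1)) force+
    also have "\<dots> \<le> phaus s (A \<union> B)" using d(1) by (rule phaus_delta_le_phaus)
    finally show ?thesis .
  qed
  have ne: "{0::real<..} \<noteq> {}" by auto
  have "phaus s A + phaus s B = (SUP d1\<in>{0<..}. phaus_delta s d1 A + phaus s B)"
    unfolding phaus_def[of s A] by (rule ennreal_SUP_add_left[OF ne, symmetric])
  also have "\<dots> = (SUP d1\<in>{0<..}. SUP d2\<in>{0<..}. phaus_delta s d1 A + phaus_delta s d2 B)"
    unfolding phaus_def[of s B] by (simp add: ennreal_SUP_add_right[OF ne])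
  also have "\<dots> \<le> phaus s (A \<union> B)"
    by (intro SUP_least) (auto intro: deltas)
  finally show "phaus s A + phaus s B \<le> phaus s (A \<union> B)" .
qed

(* Caratheodory's criterion for metric outer measures: the points of D at distance at least
   1/(k+1) from F are separated from F, and shells between consecutive levels are separated
   from each other when two apart, so their measures are summable. *)
definition pdist_away :: "'n::finite ppoint set \<Rightarrow> 'n ppoint set \<Rightarrow> nat \<Rightarrow> 'n ppoint set" where
  "pdist_away D F k = {x \<in> D. \<forall>q\<in>F. 1 / real (Suc k) \<le> pdist x q}"

definition pdist_shell :: "'n::finite ppoint set \<Rightarrow> 'n ppoint set \<Rightarrow> nat \<Rightarrow> 'n ppoint set" where
  "pdist_shell D F k = pdist_away D F (Suc (Suc k)) - pdist_away D F (Suc k)"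

lemma pdist_away_mono: "k \<le> m \<Longrightarrow> pdist_away D F k \<subseteq> pdist_away D F m"
  unfolding pdist_away_def by (auto intro: order_trans[OF frac_le[of 1 1 "real (Suc k)"]])

lemma pdist_away_subset: "pdist_away D F k \<subseteq> D"
  unfolding pdist_away_def by auto

lemma psep_pdist_away: "A \<subseteq> F \<Longrightarrow> psep A (pdist_away D F k)"
  unfolding psep_def pdist_away_def
  by (rule exI[of _ "1 / real (Suc k)"]) (auto simp: pdist_commute)

lemma psep_pdist_away_shell:
  assumes "k \<le> j"
  shows "psep (pdist_away D F k) (pdist_shell D F j)"
proof -
  have "1 / real (Suc k) - 1 / real (Suc (Suc k)) \<le> pdist y x"
    if y: "y \<in> pdist_away D F k" and x: "x \<in> pdist_shell D F j" for x y
  proof -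
    have "x \<in> D" "x \<notin> pdist_away D F (Suc k)"
      using x pdist_away_mono[of "Suc k" "Suc j" D F] assms
      unfolding pdist_shell_def pdist_away_def by auto
    then obtain q where q: "q \<in> F" "pdist x q < 1 / real (Suc (Suc k))"
      unfolding pdist_away_def by auto
    have "1 / real (Suc k) \<le> pdist y q" using y q(1) unfolding pdist_away_def by auto
    with q(2) pdist_triangle[of y q x] show ?thesis by linarith
  qed
  moreover have "0 < 1 / real (Suc k) - 1 / real (Suc (Suc k))" by (simp add: frac_less2)
  ultimately show ?thesis unfolding psep_def by blast
qed

lemma pdist_away_shell_cover:
  assumes "closed F" "D \<inter> F = {}"
  shows "D \<subseteq> pdist_away D F (Suc k) \<union> (\<Union>j. pdist_shell D F (j + k))"
proof
  fix x assume x: "x \<in> D"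
  have "\<exists>m. x \<in> pdist_away D F m"
    using closed_imp_pdist_gap[OF assms(1), of x] x assms(2) unfolding pdist_away_def by auto
  then obtain m where m: "x \<in> pdist_away D F m" "\<And>m'. m' < m \<Longrightarrow> x \<notin> pdist_away D F m'"
    using exists_least_iff[of "\<lambda>m. x \<in> pdist_away D F m"] by blast
  show "x \<in> pdist_away D F (Suc k) \<union> (\<Union>j. pdist_shell D F (j + k))"
  proof (cases "m \<le> Suc k")
    case True
    then show ?thesis using m(1) pdist_away_mono by blast
  next
    case False
    define j where "j = m - Suc (Suc k)"
    have "m = Suc (Suc (j + k))" using False by (simp add: j_def)
    then have "x \<in> pdist_shell D F (j + k)"
      using m unfolding pdist_shell_def by simp
    then show ?thesis by blast
  qed
qed

lemma sum_lessThan_double_even_odd: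
  fixes f :: "nat \<Rightarrow> 'a::comm_monoid_add"
  shows "(\<Sum>i<2 * m. f i) = (\<Sum>i<m. f (2 * i)) + (\<Sum>i<m. f (2 * i + 1))"
  by (induction m) (simp_all add: ac_simps)

lemma phaus_pdist_shells_le:
  assumes "0 < s"
  shows "(\<Sum>i<m. phaus s (pdist_shell D F (2 * i + c))) \<le> phaus s (pdist_away D F (2 * m + c))"
proof (induction m)
  case 0
  then show ?case by simp
next
  case (Suc m)
  let ?A = "pdist_away D F (2 * m + c)" and ?R = "pdist_shell D F (2 * m + c)"
  have "(\<Sum>i<Suc m. phaus s (pdist_shell D F (2 * i + c))) \<le> phaus s ?A + phaus s ?R"
    using Suc.IH by (simp add: add_right_mono)
  also have "\<dots> = phaus s (?A \<union> ?R)"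
    by (rule phaus_psep[OF assms psep_pdist_away_shell[OF order_refl], symmetric])
  also have "\<dots> \<le> phaus s (pdist_away D F (2 * Suc m + c))"
    using pdist_away_mono[of "2 * m + c" "2 * Suc m + c" D F]
    by (intro phaus_mono) (auto simp: pdist_shell_def)
  finally show ?case .
qed

lemma phaus_pdist_shells_suminf_le:
  assumes "0 < s"
  shows "(\<Sum>j. phaus s (pdist_shell D F j)) \<le> 2 * phaus s D"
  unfolding suminf_eq_SUP
proof (rule SUP_least)
  fix n
  have parity: "(\<Sum>i<n. phaus s (pdist_shell D F (2 * i + c))) \<le> phaus s D" for c
    using phaus_pdist_shells_le[OF assms] phaus_mono[OF pdist_away_subset]
    by (rule order_trans)
  have "(\<Sum>j<n. phaus s (pdist_shell D F j)) \<le> (\<Sum>j<2 * n. phaus s (pdist_shell D F j))"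
    by (intro sum_mono2) auto
  also have "\<dots> \<le> phaus s D + phaus s D"
    unfolding sum_lessThan_double_even_odd
    using parity[of 0] parity[of 1] by (intro add_mono) simp_all
  finally show "(\<Sum>j<n. phaus s (pdist_shell D F j)) \<le> 2 * phaus s D"
    by (simp add: mult_2)
qed

lemma ennreal_suminf_tail_less:
  fixes f :: "nat \<Rightarrow> ennreal"
  assumes "(\<Sum>i. f i) \<noteq> top" "0 < e"
  shows "\<exists>k. (\<Sum>i. f (i + k)) < ennreal e"
proof -
  define g where "g i = enn2real (f i)" for i
  have "f i \<noteq> top" for i
    using assms(1) ennreal_suminf_lessD[of f top i] by (simp add: top.not_eq_extremum)
  then have f_g: "f i = ennreal (g i)" for i
    unfolding g_def by (simp add: ennreal_enn2real_if)
  have "summable g"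
    using assms(1) unfolding f_g by (intro summable_suminf_not_top) (auto simp: g_def)
  then obtain k where "norm (\<Sum>i. g (i + k)) < e"
    using suminf_exist_split[OF assms(2)] by blast
  moreover have "summable (\<lambda>i. g (i + k))"
    using \<open>summable g\<close> by (simp add: summable_iff_shift)
  then have "(\<Sum>i. f (i + k)) = ennreal (\<Sum>i. g (i + k))"
    unfolding f_g by (intro suminf_ennreal2) (simp_all add: g_def)
  ultimately show ?thesis
    using assms(2) by (intro exI[of _ k]) (simp add: ennreal_lessI)
qed

lemma phaus_closed_caratheodory:
  assumes "0 < s" "closed F"
  shows "phaus s (X \<inter> F) + phaus s (X - F) \<le> phaus s X"
proof (cases "phaus s X = top")
  case False
  define D where "D = X - F"
  have "(\<Sum>j. phaus s (pdist_shell D F j)) \<noteq> top"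
    using phaus_pdist_shells_suminf_le[OF assms(1), of D F] phaus_mono[of D X s] False
    by (auto simp: D_def ennreal_mult_eq_top_iff top_unique)
  show ?thesis
  proof (rule ennreal_le_epsilon)
    fix e :: real assume "0 < e"
    then obtain k where k: "(\<Sum>j. phaus s (pdist_shell D F (j + k))) < ennreal e"
      using ennreal_suminf_tail_less[OF \<open>(\<Sum>j. _) \<noteq> top\<close>] by blast
    let ?A = "pdist_away D F (Suc k)" and ?R = "\<Union>j. pdist_shell D F (j + k)"
    have "phaus s D \<le> phaus s (?A \<union> ?R)"
      using pdist_away_shell_cover[OF assms(2), of D k] by (intro phaus_mono) (auto simp: D_def)
    also have "\<dots> \<le> phaus s ?A + phaus s ?R"
      by (rule phaus_Un_le[OF assms(1)])
    also have "\<dots> \<le> phaus s ?A + ennreal e"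
      using k phaus_subadd[of s "\<lambda>j. pdist_shell D F (j + k)"] by (intro add_left_mono) simp
    finally have "phaus s (X \<inter> F) + phaus s D \<le> phaus s (X \<inter> F) + phaus s ?A + ennreal e"
      by (simp add: add.assoc add_left_mono)
    also have "phaus s (X \<inter> F) + phaus s ?A = phaus s ((X \<inter> F) \<union> ?A)"
      by (rule phaus_psep[OF assms(1) psep_pdist_away, symmetric]) simp
    also have "\<dots> \<le> phaus s X"
      using pdist_away_subset[of D F "Suc k"] by (intro phaus_mono) (auto simp: D_def)
    finally show "phaus s (X \<inter> F) + phaus s (X - F) \<le> phaus s X + ennreal e"
      by (simp add: D_def add_right_mono)
  qed
qed simp

(* psigma is built with measure_of, which yields the null measure unless the set function is a
   measure on the Borel sets. *)
lemma measure_space_phaus_Int: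
  fixes S :: "'n::finite ppoint set"
  assumes "0 < s"
  shows "measure_space UNIV (sets borel) (\<lambda>A. phaus s (A \<inter> S))"
proof -
  define \<mu> where "\<mu> = (\<lambda>A. phaus s (A \<inter> S))"
  have "outer_measure_space (Pow UNIV) \<mu>"
    unfolding outer_measure_space_def positive_def increasing_def countably_subadditive_def \<mu>_def
    using phaus_subadd[of s "\<lambda>i. _ i \<inter> S"]
    by (auto simp: assms phaus_empty Int_UN_distrib2 intro: phaus_mono)
  interpret P: sigma_algebra "UNIV :: 'n ppoint set" "Pow UNIV" by (rule sigma_algebra_Pow)
  define L where "L = lambda_system UNIV (Pow UNIV) \<mu>"
  have L: "measure_space UNIV L \<mu>"
    unfolding L_def by (rule P.caratheodory_lemma) fact
  then interpret L: sigma_algebra "UNIV :: 'n ppoint set" L by (simp add: measure_space_def)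
  have "\<mu> (X \<inter> F) + \<mu> (X - F) = \<mu> X" if "closed F" for X F
  proof (rule antisym)
    show "\<mu> (X \<inter> F) + \<mu> (X - F) \<le> \<mu> X"
      using phaus_closed_caratheodory[OF assms that, of "X \<inter> S"] unfolding \<mu>_def
      by (simp add: Int_ac Int_Diff)
    have "X \<inter> S = (X \<inter> F \<inter> S) \<union> ((X - F) \<inter> S)" by auto
    then show "\<mu> X \<le> \<mu> (X \<inter> F) + \<mu> (X - F)"
      unfolding \<mu>_def using phaus_Un_le[OF assms] by metis
  qed
  then have "F \<in> L" if "closed F" for F
    using that unfolding L_def P.lambda_system_eq by auto
  then have "U \<in> L" if "open U" for U
    using L.compl_sets[of "- U"] that by (simp add: closed_Compl)
  then have "sets borel \<subseteq> L"
    unfolding sets_borel by (intro L.sigma_sets_subset) auto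
  then have "measure_space UNIV (sets borel) \<mu>"
    by (intro measure_down[OF L]) (auto simp: sets_borel intro: sigma_algebra_sigma_sets)
  then show ?thesis unfolding \<mu>_def .
qed

lemma sets_psigma [simp, measurable_cong]: "sets (psigma S) = sets borel"
  unfolding psigma_def using sets.sigma_sets_eq[of borel] by (simp add: sets_measure_of)

lemma emeasure_psigma:
  fixes S :: "'n::finite ppoint set"
  assumes "A \<in> sets borel"
  shows "emeasure (psigma S) A = phaus (CARD('n) + 1) (A \<inter> S)"
  unfolding psigma_def
  using measure_space_phaus_Int[of "CARD('n) + 1" S] assms unfolding measure_space_def
  by (intro emeasure_measure_of_sigma) auto

lemma mem_pcube: "q \<in> pcube r p \<longleftrightarrow> (\<forall>i. \<bar>fst q $ i - fst p $ i\<bar> < r) \<and> \<bar>snd p - snd q\<bar> < r\<^sup>2"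
  unfolding pcube_def by simp

lemma center_mem_pcube: "0 < r \<Longrightarrow> p \<in> pcube r p"
  by (simp add: mem_pcube)

lemma pcube_eq_Times:
  "pcube r p = box (fst p - (\<chi> i. r)) (fst p + (\<chi> i. r)) \<times> {snd p - r\<^sup>2<..<snd p + r\<^sup>2}"
  unfolding pcube_def by (auto simp: mem_box_cart abs_diff_less_iff abs_minus_commute[of "snd p"])

lemma open_pcube: "open (pcube r p)"
  unfolding pcube_eq_Times by (intro open_Times open_box open_greaterThanLessThan)

lemma convex_pcube: "convex (pcube r p)"
  unfolding pcube_eq_Times by (intro convex_Times convex_box convex_real_interval)

lemma closed_Int_pcube_borel: "closed S \<Longrightarrow> S \<inter> pcube r p \<in> sets borel"
  using open_pcube[of r p] by (intro sets.Int borel_closed borel_open)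

lemma pcube_subset_pcube:
  assumes "\<And>i. \<bar>fst c $ i - fst d $ i\<bar> + \<rho> \<le> R" "\<bar>snd c - snd d\<bar> + \<rho>\<^sup>2 \<le> R\<^sup>2"
  shows "pcube \<rho> c \<subseteq> pcube R d"
proof
  fix q assume "q \<in> pcube \<rho> c"
  then have X: "\<And>i. \<bar>fst q $ i - fst c $ i\<bar> < \<rho>" and t: "\<bar>snd c - snd q\<bar> < \<rho>\<^sup>2"
    unfolding mem_pcube by auto
  have "\<bar>fst q $ i - fst d $ i\<bar> < R" for i
    using X[of i] assms(1)[of i] by linarith
  moreover have "\<bar>snd d - snd q\<bar> < R\<^sup>2"
    using t assms(2) by linarith
  ultimately show "q \<in> pcube R d"
    unfolding mem_pcube by auto
qed

lemma pcube_subset_of_mem_half: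
  assumes "q \<in> pcube (R/2) z" "0 \<le> \<rho>" "\<rho> \<le> R/2"
  shows "pcube \<rho> q \<subseteq> pcube R z"
proof (rule pcube_subset_pcube)
  show "\<bar>fst q $ i - fst z $ i\<bar> + \<rho> \<le> R" for i
    using assms by (auto simp: mem_pcube dest!: spec[of _ i])
  have "\<rho>\<^sup>2 \<le> (R/2)\<^sup>2" using assms(2,3) by (intro power_mono) auto
  moreover have "\<bar>snd q - snd z\<bar> < (R/2)\<^sup>2"
    using assms(1) by (simp add: mem_pcube abs_minus_commute)
  moreover have "R\<^sup>2 = 4 * (R/2)\<^sup>2" by (simp add: power_divide)
  ultimately show "\<bar>snd q - snd z\<bar> + \<rho>\<^sup>2 \<le> R\<^sup>2" by linarith
qed

lemma pcube_time_shift_subset: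
  assumes "pcube \<rho> p \<subseteq> pcube R z" "0 < \<rho>'" "\<rho>' \<le> \<rho>" "\<rho>' \<le> R"
  shows "pcube \<rho>' (fst p, snd z) \<subseteq> pcube R z"
proof
  fix q assume q: "q \<in> pcube \<rho>' (fst p, snd z)"
  then have "\<bar>fst q $ i - fst p $ i\<bar> < \<rho>" for i
    using assms(3) unfolding mem_pcube by (auto intro: less_le_trans)
  then have "(fst q, snd p) \<in> pcube \<rho> p"
    using assms(2,3) by (simp add: mem_pcube)
  then have "(fst q, snd p) \<in> pcube R z"
    using assms(1) by blast
  then have "\<bar>fst q $ i - fst z $ i\<bar> < R" for i
    by (simp add: mem_pcube)
  moreover have "\<rho>'\<^sup>2 \<le> R\<^sup>2" using assms(2,4) by (intro power_mono) auto
  ultimately show "q \<in> pcube R z"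
    using q unfolding mem_pcube by auto
qed

lemma time_plane_normal:
  fixes P :: "'n::finite ppoint set"
  assumes "P \<in> time_planes"
  shows "\<exists>a b. norm a = 1 \<and> (\<forall>q\<in>P. a \<bullet> fst q = b)"
proof -
  have P: "affine P" "P \<noteq> {}" "aff_dim P = int CARD('n)"
    and vertical: "\<And>q c. q \<in> P \<Longrightarrow> (fst q, snd q + c) \<in> P"
    using assms unfolding time_planes_def by blast+
  have "aff_dim P = int (DIM((real^'n) \<times> real) - 1)" using P(3) by simp
  then obtain c \<beta> where "c \<noteq> 0" "affine hull P = {x. c \<bullet> x = \<beta>}"
    using aff_dim_eq_hyperplane by blast
  then have c: "c \<noteq> 0" and P_eq: "P = {x. c \<bullet> x = \<beta>}"
    using P(1) affine_hull_eq[of P] by simp_all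
  obtain q where "q \<in> P" using P(2) by auto
  then have "c \<bullet> q = \<beta>" "c \<bullet> (fst q, snd q + 1) = \<beta>"
    using vertical[of q 1] P_eq by blast+
  then have "snd c = 0"
    by (simp add: inner_prod_def algebra_simps)
  with c have "fst c \<noteq> 0" by (auto simp: prod_eq_iff)
  have "(fst c /\<^sub>R norm (fst c)) \<bullet> fst x = \<beta> / norm (fst c)" if "x \<in> P" for x
    using that \<open>snd c = 0\<close> P_eq by (simp add: inner_prod_def divide_inverse mult.commute)
  with \<open>fst c \<noteq> 0\<close> show ?thesis
    by (intro exI[of _ "fst c /\<^sub>R norm (fst c)"] exI[of _ "\<beta> / norm (fst c)"]) auto
qed

lemma abs_inner_le_pdist_set:
  assumes "P \<noteq> {}" "norm a = 1" "\<forall>y\<in>P. a \<bullet> fst y = b"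
  shows "\<bar>a \<bullet> fst q - b\<bar> \<le> pdist_set q P"
  unfolding pdist_set_def
proof (rule cInf_greatest)
  show "pdist q ` P \<noteq> {}" using assms(1) by auto
  fix d assume "d \<in> pdist q ` P"
  then obtain y where y: "y \<in> P" "d = pdist q y" by auto
  have "\<bar>a \<bullet> fst q - b\<bar> = \<bar>a \<bullet> (fst q - fst y)\<bar>"
    using assms(3) y(1) by (simp add: inner_diff_right)
  also have "\<dots> \<le> norm a * norm (fst q - fst y)" by (rule Cauchy_Schwarz_ineq2)
  also have "\<dots> \<le> d" using assms(2) y(2) by (simp add: pdist_def)
  finally show "\<bar>a \<bullet> fst q - b\<bar> \<le> d" .
qed

definition l1_norm :: "real^'n::finite \<Rightarrow> real" where
  "l1_norm a = (\<Sum>i\<in>UNIV. \<bar>a $ i\<bar>)"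

definition sgn_vec :: "real^'n::finite \<Rightarrow> real^'n" where
  "sgn_vec a = (\<chi> i. sgn (a $ i))"

lemma norm_le_l1_norm: "norm a \<le> l1_norm a"
  unfolding l1_norm_def norm_vec_def using L2_set_le_sum[of UNIV "\<lambda>i. norm (a $ i)"] by simp

lemma l1_norm_le_card: "norm a \<le> 1 \<Longrightarrow> l1_norm a \<le> real CARD('n)" for a :: "real^'n::finite"
proof -
  assume "norm a \<le> 1"
  then have "\<bar>a $ i\<bar> \<le> 1" for i using component_le_norm_cart[of a i] by simp
  then have "l1_norm a \<le> (\<Sum>i\<in>(UNIV::'n set). 1)" unfolding l1_norm_def by (intro sum_mono) auto
  then show ?thesis by simp
qed

lemma abs_inner_le_l1_norm:
  assumes "\<And>i. \<bar>v $ i\<bar> \<le> R"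
  shows "\<bar>a \<bullet> v\<bar> \<le> l1_norm a * R"
proof -
  have "\<bar>a \<bullet> v\<bar> \<le> (\<Sum>i\<in>UNIV. \<bar>a $ i\<bar> * \<bar>v $ i\<bar>)"
    unfolding inner_vec_def by (rule order_trans[OF sum_abs]) (simp add: abs_mult)
  also have "\<dots> \<le> (\<Sum>i\<in>UNIV. \<bar>a $ i\<bar> * R)"
    using assms by (intro sum_mono mult_left_mono) auto
  finally show ?thesis unfolding l1_norm_def by (simp add: sum_distrib_right)
qed

lemma abs_inner_diff_le_card_pcube:
  fixes a :: "real^'n::finite"
  assumes "norm a = 1" "q \<in> pcube \<rho> p"
  shows "\<bar>a \<bullet> (fst q - fst p)\<bar> \<le> real CARD('n) * \<rho>"
proof -
  have "\<bar>a \<bullet> (fst q - fst p)\<bar> \<le> l1_norm a * \<rho>"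
    using assms(2) by (intro abs_inner_le_l1_norm) (auto simp: mem_pcube less_imp_le)
  also have "\<dots> \<le> real CARD('n) * \<rho>"
  proof (rule mult_right_mono)
    show "l1_norm a \<le> real CARD('n)" by (rule l1_norm_le_card) (simp add: assms(1))
    show "0 \<le> \<rho>"
      using assms(2) unfolding mem_pcube by (meson abs_ge_zero le_less_trans less_imp_le)
  qed
  finally show ?thesis .
qed

lemma inner_sgn_vec: "a \<bullet> sgn_vec a = l1_norm a"
  unfolding sgn_vec_def l1_norm_def inner_vec_def by (simp add: abs_sgn)

section \<open>Flatness from small beta numbers\<close>

lemma set_nn_integral_ge_cmult_emeasure:
  assumes "A \<in> sets M" "A \<subseteq> B" "\<And>x. x \<in> A \<Longrightarrow> c \<le> f x"
  shows "c * emeasure M A \<le> (\<integral>\<^sup>+x\<in>B. f x \<partial>M)"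
proof -
  have "c * emeasure M A = (\<integral>\<^sup>+x. c * indicator A x \<partial>M)"
    using assms(1) by (simp add: nn_integral_cmult_indicator)
  also have "\<dots> \<le> (\<integral>\<^sup>+x\<in>B. f x \<partial>M)"
    using assms(2,3) by (intro nn_integral_mono) (auto split: split_indicator)
  finally show ?thesis .
qed

lemma emeasure_psigma_pcube_ge:
  fixes S :: "'n::finite ppoint set"
  assumes "closed S" "parabolic_ADR M S" "p \<in> S" "in_time_range S (snd p)" "0 < r"
    "ennreal r < pdiam S"
  shows "ennreal (r ^ (CARD('n) + 1) / M) \<le> emeasure (psigma S) (S \<inter> pcube r p)"
proof -
  have "emeasure (psigma S) (S \<inter> pcube r p) = phaus (CARD('n) + 1) (S \<inter> pcube r p)"
    using emeasure_psigma[OF closed_Int_pcube_borel[OF assms(1)]] by (simp add: Int_ac)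
  with assms(2-) show ?thesis unfolding parabolic_ADR_def by simp
qed

(* (e/2)^2 times the ADR lower mass of a cube of radius e s / (2n), divided by s^(n+1): a
   lower bound for the beta integral once a point of Sigma lies at distance e s from the plane. *)
definition beta_threshold :: "nat \<Rightarrow> real \<Rightarrow> real \<Rightarrow> real" where
  "beta_threshold n M e = e\<^sup>2 * (e / (2 * real n)) ^ (n + 1) / (4 * M)"

lemma pdist_set_ge_near_far_point:
  fixes a :: "real^'n::finite"
  assumes P: "P \<in> time_planes" and a: "norm a = 1" "\<forall>y\<in>P. a \<bullet> fst y = b"
    and far: "e * s < \<bar>a \<bullet> fst q0 - b\<bar>" and q: "q \<in> pcube (e / (2 * real CARD('n)) * s) q0"
  shows "e * s / 2 \<le> pdist_set q P"
proof -
  have "\<bar>a \<bullet> (fst q - fst q0)\<bar> \<le> e * s / 2"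
    using abs_inner_diff_le_card_pcube[OF a(1) q] by simp
  moreover have "\<bar>a \<bullet> fst q0 - b\<bar> \<le> \<bar>a \<bullet> fst q - b\<bar> + \<bar>a \<bullet> (fst q - fst q0)\<bar>"
    using abs_triangle_ineq4[of "a \<bullet> fst q - b" "a \<bullet> (fst q - fst q0)"]
    by (simp add: inner_diff_right)
  ultimately have "e * s / 2 \<le> \<bar>a \<bullet> fst q - b\<bar>"
    using far by linarith
  also have "\<dots> \<le> pdist_set q P"
    using P a by (intro abs_inner_le_pdist_set) (auto simp: time_planes_def)
  finally show ?thesis .
qed

lemma beta_integral_ge_of_far_point:
  fixes S :: "'n::finite ppoint set"
  defines "k \<equiv> CARD('n) + 1"
  assumes S: "closed S" "parabolic_ADR M S" and M: "0 < M"
    and s: "0 < s" "ennreal s < pdiam S" and rng: "\<forall>q\<in>pcube s z. in_time_range S (snd q)"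
    and P: "P \<in> time_planes" and a: "norm a = 1" "\<forall>y\<in>P. a \<bullet> fst y = b"
    and e: "0 < e" "e \<le> 1"
    and q0: "q0 \<in> S" "q0 \<in> pcube (s/2) z" and far: "e * s < \<bar>a \<bullet> fst q0 - b\<bar>"
  shows "ennreal (beta_threshold CARD('n) M e)
    \<le> ennreal (1 / s ^ k) * (\<integral>\<^sup>+q\<in>S \<inter> pcube s z. ennreal ((pdist_set q P / s)\<^sup>2) \<partial>psigma S)"
proof -
  define \<rho> where "\<rho> = e / (2 * real CARD('n)) * s"
  have "1 \<le> real CARD('n)"
    using zero_less_card_finite[where 'a='n] by linarith
  then have "e \<le> real CARD('n)" using e by linarith
  then have "e * s \<le> real CARD('n) * s"
    using s by (intro mult_right_mono) auto
  then have \<rho>: "0 < \<rho>" "\<rho> \<le> s/2"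
    using e s by (simp_all add: \<rho>_def field_simps)
  have cube: "pcube \<rho> q0 \<subseteq> pcube s z"
    using q0(2) \<rho> by (intro pcube_subset_of_mem_half) auto
  have far_cube: "ennreal ((e/2)\<^sup>2) \<le> ennreal ((pdist_set q P / s)\<^sup>2)" if "q \<in> pcube \<rho> q0" for q
    using pdist_set_ge_near_far_point[OF P a far that[unfolded \<rho>_def]] e s
    by (intro ennreal_leI power_mono) (auto simp: field_simps)
  have mass: "ennreal (\<rho> ^ k / M) \<le> emeasure (psigma S) (S \<inter> pcube \<rho> q0)"
    unfolding k_def
  proof (rule emeasure_psigma_pcube_ge[OF S q0(1) _ \<rho>(1)])
    show "in_time_range S (snd q0)" using rng cube center_mem_pcube[OF \<rho>(1)] by blast
    show "ennreal \<rho> < pdiam S" using \<rho> s by (intro le_less_trans[OF ennreal_leI s(2)]) auto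
  qed
  have "ennreal (beta_threshold CARD('n) M e)
      = ennreal (1 / s ^ k) * (ennreal ((e/2)\<^sup>2) * ennreal (\<rho> ^ k / M))"
    using s M e unfolding beta_threshold_def \<rho>_def k_def
    by (simp add: ennreal_mult[symmetric] power_mult_distrib field_simps)
  also have "\<dots> \<le> ennreal (1 / s ^ k) * (ennreal ((e/2)\<^sup>2) * emeasure (psigma S) (S \<inter> pcube \<rho> q0))"
    using mass by (intro mult_left_mono) auto
  also have "\<dots> \<le> ennreal (1 / s ^ k) * (\<integral>\<^sup>+q\<in>S \<inter> pcube s z. ennreal ((pdist_set q P / s)\<^sup>2) \<partial>psigma S)"
    using cube far_cube
    by (intro mult_left_mono set_nn_integral_ge_cmult_emeasure) (auto simp: closed_Int_pcube_borel S)
  finally show ?thesis .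
qed

lemma flat_of_beta_sq_less:
  fixes S :: "'n::finite ppoint set"
  assumes S: "closed S" "parabolic_ADR M S" "0 < M"
    and s: "0 < s" "ennreal s < pdiam S" "\<forall>q\<in>pcube s z. in_time_range S (snd q)"
    and e: "0 < e" "e \<le> 1"
    and small: "beta_sq S z s < ennreal (beta_threshold CARD('n) M e)"
  shows "\<exists>a b. norm a = 1 \<and> (\<forall>q\<in>S \<inter> pcube (s/2) z. \<bar>a \<bullet> fst q - b\<bar> \<le> e * s)"
proof -
  obtain P where P: "P \<in> time_planes" and P_small:
    "ennreal (1 / s ^ (CARD('n) + 1)) * (\<integral>\<^sup>+q\<in>S \<inter> pcube s z. ennreal ((pdist_set q P / s)\<^sup>2) \<partial>psigma S)
      < ennreal (beta_threshold CARD('n) M e)"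
    using small unfolding beta_sq_def INF_less_iff by blast
  obtain a b where a: "norm a = 1" "\<forall>y\<in>P. a \<bullet> fst y = b"
    using time_plane_normal[OF P] by blast
  have "\<bar>a \<bullet> fst q - b\<bar> \<le> e * s" if "q \<in> S \<inter> pcube (s/2) z" for q
    using beta_integral_ge_of_far_point[OF S s P a e, of q] that P_small by fastforce
  with a show ?thesis by blast
qed

section \<open>Small beta numbers from the Carleson condition\<close>

lemma nn_integral_inverse_Icc:
  assumes "0 < a" "0 \<le> \<eta>" "0 \<le> K"
  shows "(\<integral>\<^sup>+s. ennreal (\<eta> / s) * indicator {exp (- K) * a..a} s \<partial>lborel) = ennreal (\<eta> * K)"
proof -
  have pos: "0 < s" if "s \<in> {exp (- K) * a..a}" for s
    using that assms(1) by (auto intro: less_le_trans[of 0 "exp (- K) * a"])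
  have "(\<integral>\<^sup>+s. ennreal (\<eta> / s) * indicator {exp (- K) * a..a} s \<partial>lborel)
      = ennreal (\<eta> * ln a - \<eta> * ln (exp (- K) * a))"
  proof (rule nn_integral_FTC_Icc)
    show "((\<lambda>x. \<eta> * ln x) has_real_derivative \<eta> / x) (at x)" if "x \<in> {exp (- K) * a..a}" for x
      using pos[OF that] by (auto intro!: derivative_eq_intros simp: field_simps)
    show "(\<lambda>x. \<eta> / x) \<in> borel_measurable borel" by measurable
    show "0 \<le> \<eta> / x" if "x \<in> {exp (- K) * a..a}" for x
      using pos[OF that] assms(2) by simp
    show "exp (- K) * a \<le> a"
      using assms by (simp add: mult_le_cancel_right1)
  qed
  also have "\<eta> * ln a - \<eta> * ln (exp (- K) * a) = \<eta> * K"
    using assms(1) by (simp add: ln_mult algebra_simps)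
  finally show ?thesis .
qed

lemma set_nn_integral_inverse_ge:
  fixes f :: "real \<Rightarrow> ennreal"
  assumes "0 < a" "a < b" "0 \<le> \<eta>" "0 \<le> K"
    and f: "\<And>s. s \<in> {exp (- K) * a..a} \<Longrightarrow> ennreal \<eta> \<le> f s"
  shows "ennreal (\<eta> * K) \<le> (\<integral>\<^sup>+s\<in>{0<..<b}. f s * ennreal (1 / s) \<partial>lborel)"
proof -
  have "ennreal (\<eta> * K) = (\<integral>\<^sup>+s. ennreal (\<eta> / s) * indicator {exp (- K) * a..a} s \<partial>lborel)"
    using nn_integral_inverse_Icc[OF assms(1,3,4)] by simp
  also have "\<dots> \<le> (\<integral>\<^sup>+s\<in>{0<..<b}. f s * ennreal (1 / s) \<partial>lborel)"
  proof (intro nn_integral_mono)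
    fix s :: real
    show "ennreal (\<eta> / s) * indicator {exp (- K) * a..a} s \<le> f s * ennreal (1 / s) * indicator {0<..<b} s"
    proof (cases "s \<in> {exp (- K) * a..a}")
      case True
      then have "0 < s" "s < b"
        using assms(1,2) by (auto intro: less_le_trans[of 0 "exp (- K) * a"])
      then have "ennreal (\<eta> / s) = ennreal \<eta> * ennreal (1 / s)"
        using assms(3) by (simp add: ennreal_mult[symmetric])
      also have "\<dots> \<le> f s * ennreal (1 / s)"
        using f[OF True] by (rule mult_right_mono) simp
      finally show ?thesis using True \<open>0 < s\<close> \<open>s < b\<close> by simp
    qed simp
  qed
  finally show ?thesis .
qed

(* The integral of ds/s over [carleson_depth M Mt eta * r, r/4] is max 0 (Mt M / eta) + 1,
   which exceeds the Carleson budget Mt M / eta. *)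
definition carleson_depth :: "real \<Rightarrow> real \<Rightarrow> real \<Rightarrow> real" where
  "carleson_depth M Mt \<eta> = exp (- (max 0 (Mt * M / \<eta>) + 1)) / 4"

lemma carleson_depth_pos: "0 < carleson_depth M Mt \<eta>"
  by (simp add: carleson_depth_def)

lemma carleson_depth_le: "carleson_depth M Mt \<eta> \<le> 1 / 4"
  by (simp add: carleson_depth_def)

lemma carleson_small_beta:
  fixes S :: "'n::finite ppoint set"
  defines "k \<equiv> CARD('n) + 1"
  assumes S: "closed S" and M: "0 < M" and \<eta>: "0 < \<eta>" and r: "0 < r"
    and UR: "nu_box S p (r/2) \<le> ennreal (Mt * (r/2) ^ k)"
    and mass: "ennreal ((r/2) ^ k / M) \<le> emeasure (psigma S) (S \<inter> pcube (r/2) p)"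
  shows "\<exists>z\<in>S \<inter> pcube (r/2) p. \<exists>s. carleson_depth M Mt \<eta> * r \<le> s \<and> s \<le> r/4 \<and> beta_sq S z s < ennreal \<eta>"
proof (rule ccontr)
  define K where "K = max 0 (Mt * M / \<eta>) + 1"
  have depth: "carleson_depth M Mt \<eta> * r = exp (- K) * (r/4)"
    by (simp add: carleson_depth_def K_def)
  assume "\<not> ?thesis"
  then have big: "ennreal \<eta> \<le> beta_sq S z s"
    if "z \<in> S \<inter> pcube (r/2) p" "s \<in> {exp (- K) * (r/4)..r/4}" for z s
    using that unfolding depth by (auto simp: not_less)
  have log: "ennreal (\<eta> * K) \<le> (\<integral>\<^sup>+s\<in>{0<..<r/2}. beta_sq S z s * ennreal (1 / s) \<partial>lborel)"
    if "z \<in> S \<inter> pcube (r/2) p" for z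
    using r \<eta> big[OF that] by (intro set_nn_integral_inverse_ge[where a = "r/4"]) (auto simp: K_def)
  have "ennreal (\<eta> * K) * ennreal ((r/2) ^ k / M) \<le> ennreal (\<eta> * K) * emeasure (psigma S) (S \<inter> pcube (r/2) p)"
    using mass by (rule mult_left_mono) simp
  also have "\<dots> \<le> nu_box S p (r/2)"
    unfolding nu_box_def using log
    by (intro set_nn_integral_ge_cmult_emeasure) (auto simp: closed_Int_pcube_borel S)
  finally have ineq: "ennreal (\<eta> * K * ((r/2) ^ k / M)) \<le> ennreal (Mt * (r/2) ^ k)"
    using UR \<eta> M r by (simp add: ennreal_mult[symmetric] K_def)
  moreover have "Mt * (r/2) ^ k < \<eta> * K * ((r/2) ^ k / M)"
  proof -
    have "Mt * M / \<eta> < K" unfolding K_def by linarith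
    then have "Mt * M < \<eta> * K" using \<eta> by (simp add: field_simps)
    then have "Mt < \<eta> * K / M" using M by (simp add: field_simps)
    then have "Mt * (r/2) ^ k < \<eta> * K / M * (r/2) ^ k"
      using r by (intro mult_strict_right_mono) auto
    then show ?thesis by simp
  qed
  moreover have "0 < \<eta> * K * ((r/2) ^ k / M)" using \<eta> M r by (simp add: K_def)
  ultimately have "ennreal (Mt * (r/2) ^ k) < ennreal (\<eta> * K * ((r/2) ^ k / M))"
    by (intro ennreal_lessI)
  with ineq show False by simp
qed

section \<open>Synchronizing the corkscrew cubes\<close>

(* Moving X by c along the sign vector of a changes a.X by c times the l1 norm of a, the most
   a displacement of sup-norm |c| can achieve. *)
definition sgn_shift :: "real^'n::finite \<Rightarrow> real \<Rightarrow> 'n ppoint \<Rightarrow> 'n ppoint" where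
  "sgn_shift a c p = (fst p + c *\<^sub>R sgn_vec a, snd p)"

lemma sgn_shift_mem_pcube:
  assumes "\<bar>c\<bar> < r"
  shows "sgn_shift a c p \<in> pcube r p"
proof -
  have "\<bar>c * sgn (a $ i)\<bar> \<le> \<bar>c\<bar>" for i
    by (simp add: abs_mult abs_sgn_eq)
  with assms show ?thesis
    unfolding mem_pcube sgn_shift_def sgn_vec_def by (auto intro: le_less_trans)
qed

lemma inner_sgn_shift: "a \<bullet> fst (sgn_shift a c p) = a \<bullet> fst p + c * l1_norm a"
  unfolding sgn_shift_def by (simp add: inner_add_right inner_sgn_vec)

lemma sgn_shift_uminus: "sgn_shift (- a) c p = sgn_shift a (- c) p"
  unfolding sgn_shift_def sgn_vec_def by (simp add: vec_eq_iff)

lemma time_shifted_cube_above_slab: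
  fixes a :: "real^'n::finite"
  assumes a: "norm a = 1" and r: "0 < r" "8 * h < r"
    and p: "- h \<le> a \<bullet> fst (sgn_shift a (- r/2) p) - b" and q: "q \<in> pcube (r/4) (fst p, t)"
  shows "h < a \<bullet> fst q - b"
proof -
  have "1 \<le> l1_norm a" using norm_le_l1_norm[of a] a by simp
  then have "r/4 \<le> l1_norm a * (r/4)" using r by simp
  moreover have "\<bar>a \<bullet> (fst q - fst p)\<bar> \<le> l1_norm a * (r/4)"
    using q by (intro abs_inner_le_l1_norm) (auto simp: mem_pcube less_imp_le)
  moreover have "a \<bullet> fst q - b = (a \<bullet> fst p - b) + a \<bullet> (fst q - fst p)"
    by (simp add: inner_diff_right)
  moreover have "- r/2 * l1_norm a = - 2 * (l1_norm a * (r/4))" by simp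
  ultimately show ?thesis
    using p r abs_ge_minus_self[of "a \<bullet> (fst q - fst p)"] unfolding inner_sgn_shift by linarith
qed

lemma flat_half_subset_component:
  fixes S C :: "'n::finite ppoint set"
  assumes U: "U \<in> components (- S)" and flat: "\<forall>q\<in>S \<inter> C. \<bar>a \<bullet> fst q - b\<bar> \<le> h"
    and C: "convex C" and x: "x \<in> U" "x \<in> C" "h < a \<bullet> fst x - b"
  shows "C \<inter> {q. h < a \<bullet> fst q - b} \<subseteq> U"
proof (rule components_maximal[OF U])
  have "{q. h < a \<bullet> fst q - b} = {q. h + b < (a, 0) \<bullet> q}"
    by (auto simp: inner_prod_def)
  moreover have "convex (C \<inter> {q. h + b < (a, 0) \<bullet> q})"
    by (intro convex_Int C convex_halfspace_gt)
  ultimately show "connected (C \<inter> {q. h < a \<bullet> fst q - b})"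
    by (metis convex_connected)
  show "C \<inter> {q. h < a \<bullet> fst q - b} \<subseteq> - S"
  proof
    fix q assume q: "q \<in> C \<inter> {q. h < a \<bullet> fst q - b}"
    then have "\<not> \<bar>a \<bullet> fst q - b\<bar> \<le> h" by auto
    with flat q show "q \<in> - S" by blast
  qed
  show "U \<inter> (C \<inter> {q. h < a \<bullet> fst q - b}) \<noteq> {}"
    using x by blast
qed

lemma flat_half_meets_one_component:
  fixes S C :: "'n::finite ppoint set"
  assumes U: "U1 \<in> components (- S)" "U2 \<in> components (- S)"
    and flat: "\<forall>q\<in>S \<inter> C. \<bar>a \<bullet> fst q - b\<bar> \<le> h" and C: "convex C"
    and x: "x \<in> U1" "x \<in> C" "h < a \<bullet> fst x - b"
    and y: "y \<in> U2" "y \<in> C" "h < a \<bullet> fst y - b"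
  shows "U1 = U2"
proof -
  have "y \<in> U1" using flat_half_subset_component[OF U(1) flat C x] y by blast
  then show ?thesis using components_nonoverlap[OF U] y(1) by blast
qed

lemma time_shifted_cube_subset_component:
  fixes a :: "real^'n::finite"
  assumes flat: "\<forall>q\<in>S \<inter> pcube R z. \<bar>a \<bullet> fst q - b\<bar> \<le> h" and a: "norm a = 1"
    and h: "0 < h" "8 * h < r" "r \<le> R"
    and U: "U1 \<in> components (- S)" "U2 \<in> components (- S)" "U1 \<noteq> U2"
    and Q1: "pcube r p1 \<subseteq> pcube R z \<inter> U1" and Q2: "pcube r p2 \<subseteq> pcube R z \<inter> U2"
    and up: "h < a \<bullet> fst (sgn_shift a (r/2) p1) - b"
    and down: "a \<bullet> fst (sgn_shift a (- r/2) p2) - b < - h"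
  shows "pcube (r/4) (fst p1, snd z) \<subseteq> U1"
proof
  have r: "0 < r" using h by linarith
  have shift1: "sgn_shift a c p1 \<in> pcube R z \<inter> U1" if "\<bar>c\<bar> < r" for c
    using Q1 sgn_shift_mem_pcube[OF that] by blast
  have upper: "pcube R z \<inter> {q. h < a \<bullet> fst q - b} \<subseteq> U1"
    using shift1[of "r/2"] r up by (intro flat_half_subset_component[OF U(1) flat convex_pcube]) auto
  have x2: "sgn_shift a (- r/2) p2 \<in> U2" "sgn_shift a (- r/2) p2 \<in> pcube R z"
    using Q2 sgn_shift_mem_pcube[of "- r/2" r a p2] r by auto
  have lower: "pcube R z \<inter> {q. h < (- a) \<bullet> fst q - (- b)} \<subseteq> U2"
  proof (rule flat_half_subset_component[OF U(2) _ convex_pcube x2])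
    show "\<forall>q\<in>S \<inter> pcube R z. \<bar>(- a) \<bullet> fst q - (- b)\<bar> \<le> h"
      using flat by (simp add: abs_minus_commute)
    show "h < (- a) \<bullet> fst (sgn_shift a (- r/2) p2) - (- b)"
      using down by simp
  qed
  have x1: "sgn_shift a (- r/2) p1 \<in> U1" "sgn_shift a (- r/2) p1 \<in> pcube R z"
    using shift1[of "- r/2"] r by auto
  (* the lower half lies in U2, so the point of pcube r p1 pushed down by r/2 is not in it *)
  have "\<not> h < (- a) \<bullet> fst (sgn_shift a (- r/2) p1) - (- b)"
  proof
    assume "h < (- a) \<bullet> fst (sgn_shift a (- r/2) p1) - (- b)"
    then have "sgn_shift a (- r/2) p1 \<in> U2" using lower x1(2) by blast
    then show False using x1(1) components_nonoverlap[OF U(1,2)] U(3) by blast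
  qed
  then have "- h \<le> a \<bullet> fst (sgn_shift a (- r/2) p1) - b" by simp
  fix q assume q: "q \<in> pcube (r/4) (fst p1, snd z)"
  have "pcube (r/4) (fst p1, snd z) \<subseteq> pcube R z"
    using Q1 r h by (intro pcube_time_shift_subset) auto
  then have "q \<in> pcube R z" using q by blast
  moreover have "h < a \<bullet> fst q - b"
    using time_shifted_cube_above_slab[OF a r h(2) \<open>- h \<le> _\<close> q] .
  ultimately show "q \<in> U1" using upper by blast
qed

lemma synchronized_cubes_subset_components:
  fixes a :: "real^'n::finite"
  assumes flat: "\<forall>q\<in>S \<inter> pcube R z. \<bar>a \<bullet> fst q - b\<bar> \<le> h" and a: "norm a = 1"
    and h: "0 < h" "8 * h < r" "r \<le> R"
    and U: "U1 \<in> components (- S)" "U2 \<in> components (- S)" "U1 \<noteq> U2"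
    and Q1: "pcube r p1 \<subseteq> pcube R z \<inter> U1" and Q2: "pcube r p2 \<subseteq> pcube R z \<inter> U2"
  shows "pcube (r/4) (fst p1, snd z) \<subseteq> U1 \<and> pcube (r/4) (fst p2, snd z) \<subseteq> U2"
proof -
  let ?v = "\<lambda>c p. a \<bullet> fst (sgn_shift a c p) - b"
  have r: "0 < r" using h by linarith
  have "1 \<le> l1_norm a" using norm_le_l1_norm[of a] a by simp
  then have "r \<le> r * l1_norm a" using r by simp
  then have side: "h < ?v (r/2) p \<or> ?v (- r/2) p < - h" for p
    using h unfolding inner_sgn_shift by linarith
  have flat': "\<forall>q\<in>S \<inter> pcube R z. \<bar>(- a) \<bullet> fst q - (- b)\<bar> \<le> h" and a': "norm (- a) = 1"
    using flat a by (simp_all add: abs_minus_commute)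
  have not_both: "\<not> (h < a' \<bullet> fst x - b' \<and> h < a' \<bullet> fst y - b')"
    if "x \<in> pcube r p1" "y \<in> pcube r p2" "\<forall>q\<in>S \<inter> pcube R z. \<bar>a' \<bullet> fst q - b'\<bar> \<le> h"
    for x y a' b'
    using flat_half_meets_one_component[OF U(1,2) that(3) convex_pcube, of x y] that Q1 Q2 U(3)
    by blast
  have "\<not> (h < ?v (r/2) p1 \<and> h < ?v (r/2) p2)"
    using not_both[OF sgn_shift_mem_pcube[of "r/2" r a p1] sgn_shift_mem_pcube[of "r/2" r a p2] flat] r
    by simp
  moreover have "\<not> (?v (- r/2) p1 < - h \<and> ?v (- r/2) p2 < - h)"
    using not_both[OF sgn_shift_mem_pcube[of "- r/2" r a p1] sgn_shift_mem_pcube[of "- r/2" r a p2] flat'] r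
    by auto
  ultimately consider "h < ?v (r/2) p1" "?v (- r/2) p2 < - h" | "?v (- r/2) p1 < - h" "h < ?v (r/2) p2"
    using side[of p1] side[of p2] by blast
  then show ?thesis
  proof cases
    case 1
    then show ?thesis
      using time_shifted_cube_subset_component[OF flat a h U Q1 Q2]
        time_shifted_cube_subset_component[OF flat' a' h U(2,1) U(3)[symmetric] Q2 Q1]
      by (simp add: sgn_shift_uminus)
  next
    case 2
    then show ?thesis
      using time_shifted_cube_subset_component[OF flat a h U(2,1) U(3)[symmetric] Q2 Q1]
        time_shifted_cube_subset_component[OF flat' a' h U Q1 Q2]
      by (simp add: sgn_shift_uminus)
  qed
qed

section \<open>The two cube condition at a single point and scale\<close>

definition two_cube_at :: "bool \<Rightarrow> real \<Rightarrow> 'n::finite ppoint set \<Rightarrow> 'n ppoint \<Rightarrow> real \<Rightarrow> bool" where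
  "two_cube_at sync \<gamma> S p r \<longleftrightarrow>
     (\<exists>\<rho> p1 p2. \<gamma> * r \<le> \<rho> \<and> \<rho> < r \<and> pcube \<rho> p1 \<subseteq> pcube r p \<and> pcube \<rho> p2 \<subseteq> pcube r p \<and>
        (sync \<longrightarrow> snd p1 = snd p2) \<and>
        (\<exists>U1 U2. U1 \<in> components (- S) \<and> U2 \<in> components (- S) \<and> U1 \<noteq> U2 \<and>
           pcube \<rho> p1 \<inter> {q. in_time_range S (snd q)} \<subseteq> U1 \<and>
           pcube \<rho> p2 \<inter> {q. in_time_range S (snd q)} \<subseteq> U2))"

lemma two_cube_iff:
  "two_cube sync \<gamma> S \<longleftrightarrow>
    (\<forall>p\<in>S. \<forall>r. in_time_range S (snd p) \<and> 0 < r \<and> ennreal r < pdiam S \<longrightarrow> two_cube_at sync \<gamma> S p r)"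
  unfolding two_cube_def two_cube_at_def ..

lemma two_cube_atI:
  assumes "\<gamma> * r \<le> \<rho>" "\<rho> < r" "pcube \<rho> x \<subseteq> pcube r p" "pcube \<rho> y \<subseteq> pcube r p"
    "sync \<longrightarrow> snd x = snd y" "U \<in> components (- S)" "V \<in> components (- S)" "U \<noteq> V"
    "pcube \<rho> x \<inter> {q. in_time_range S (snd q)} \<subseteq> U"
    "pcube \<rho> y \<inter> {q. in_time_range S (snd q)} \<subseteq> V"
  shows "two_cube_at sync \<gamma> S p r"
  using assms unfolding two_cube_at_def by blast

lemma two_cube_at_imp_components:
  "two_cube_at sync \<gamma> S p r \<Longrightarrow> \<exists>U1 U2. U1 \<in> components (- S) \<and> U2 \<in> components (- S) \<and> U1 \<noteq> U2"
  unfolding two_cube_at_def by blast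

lemma in_time_range_within:
  assumes "T0 S < ereal (t - c)" "ereal (t + c) < T1 S" "\<bar>\<tau> - t\<bar> \<le> c"
  shows "in_time_range S \<tau>"
proof -
  have "ereal (t - c) \<le> ereal \<tau>" "ereal \<tau> \<le> ereal (t + c)" using assms(3) by auto
  with assms(1,2) show ?thesis
    unfolding in_time_range_def by (meson less_le_trans le_less_trans)
qed

lemma not_in_time_range_before:
  assumes "ereal t \<le> T0 S" "\<tau> < t"
  shows "\<not> in_time_range S \<tau>"
proof
  assume "in_time_range S \<tau>"
  then have "T0 S < ereal \<tau>" by (simp add: in_time_range_def)
  also have "ereal \<tau> < ereal t" using assms(2) by simp
  finally show False using leD[OF assms(1)] by blast
qed

lemma not_in_time_range_after:
  assumes "T1 S \<le> ereal t" "t < \<tau>"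
  shows "\<not> in_time_range S \<tau>"
proof
  assume "in_time_range S \<tau>"
  have "ereal t < ereal \<tau>" using assms(2) by simp
  also have "ereal \<tau> < T1 S" using \<open>in_time_range S \<tau>\<close> by (simp add: in_time_range_def)
  finally show False using leD[OF assms(1)] by blast
qed

lemma two_cube_at_near_time_boundary:
  assumes r: "0 < r" and \<gamma>: "\<gamma> \<le> 1/2"
    and U: "U1 \<in> components (- S)" "U2 \<in> components (- S)" "U1 \<noteq> U2"
    and T: "ereal (snd p - r\<^sup>2/2) \<le> T0 S \<or> T1 S \<le> ereal (snd p + r\<^sup>2/2)"
  shows "two_cube_at sync \<gamma> S p r"
proof -
  (* a cube missing the time range serves as both cubes *)
  obtain c where c: "fst c = fst p" "\<bar>snd c - snd p\<bar> = 3 * r\<^sup>2 / 4"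
    and outside: "\<And>q. q \<in> pcube (r/2) c \<Longrightarrow> \<not> in_time_range S (snd q)"
  proof (cases "ereal (snd p - r\<^sup>2/2) \<le> T0 S")
    case True
    show ?thesis
    proof (rule that[of "(fst p, snd p - 3 * r\<^sup>2 / 4)"])
      fix q assume "q \<in> pcube (r/2) (fst p, snd p - 3 * r\<^sup>2 / 4)"
      then have "\<bar>snd p - 3 * r\<^sup>2 / 4 - snd q\<bar> < r\<^sup>2 / 4"
        by (simp add: mem_pcube power_divide)
      then have "snd q < snd p - r\<^sup>2/2"
        unfolding abs_less_iff by linarith
      with True show "\<not> in_time_range S (snd q)"
        by (rule not_in_time_range_before)
    qed auto
  next
    case False
    with T have T1: "T1 S \<le> ereal (snd p + r\<^sup>2/2)" by blast
    show ?thesis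
    proof (rule that[of "(fst p, snd p + 3 * r\<^sup>2 / 4)"])
      fix q assume "q \<in> pcube (r/2) (fst p, snd p + 3 * r\<^sup>2 / 4)"
      then have "\<bar>snd p + 3 * r\<^sup>2 / 4 - snd q\<bar> < r\<^sup>2 / 4"
        by (simp add: mem_pcube power_divide)
      then have "snd p + r\<^sup>2/2 < snd q"
        unfolding abs_less_iff by linarith
      with T1 show "\<not> in_time_range S (snd q)"
        by (rule not_in_time_range_after)
    qed auto
  qed
  have "pcube (r/2) c \<subseteq> pcube r p"
    using c r by (intro pcube_subset_pcube) (simp_all add: power_divide)
  moreover have "\<gamma> * r \<le> r/2" using \<gamma> r by simp
  ultimately show ?thesis
    using r U outside
    by (intro two_cube_atI[where \<rho> = "r/2" and x = c and y = c and U = U1 and V = U2]) auto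
qed

lemma two_cube_at_subcube:
  assumes "two_cube_at sync \<gamma> S z s" "pcube s z \<subseteq> pcube r p" "\<gamma>' * r \<le> \<gamma> * s" "s \<le> r"
  shows "two_cube_at sync \<gamma>' S p r"
  using assms unfolding two_cube_at_def by (meson order_trans less_le_trans)

lemma two_cube_at_sync_of_flat:
  assumes \<gamma>0: "0 < \<gamma>0" and S: "corkscrew \<gamma>0 S" and z: "z \<in> S"
    and s: "0 < s" "ennreal s < pdiam S" and rng: "\<forall>q\<in>pcube s z. in_time_range S (snd q)"
    and a: "norm a = 1" and flat: "\<forall>q\<in>S \<inter> pcube (s/2) z. \<bar>a \<bullet> fst q - b\<bar> \<le> \<gamma>0/32 * s"
  shows "two_cube_at True (\<gamma>0/8) S z s"
proof -
  have half: "pcube (s/2) z \<subseteq> pcube s z"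
    using s(1) by (intro pcube_subset_pcube) (auto simp: power_divide)
  have "in_time_range S (snd z)" using rng center_mem_pcube[OF s(1)] by blast
  moreover have "ennreal (s/2) < pdiam S" using s by (intro le_less_trans[OF ennreal_leI s(2)]) auto
  ultimately have "two_cube_at False \<gamma>0 S z (s/2)"
    using S z s(1) unfolding corkscrew_def two_cube_iff by auto
  then obtain \<rho> p1 p2 U1 U2 where \<rho>: "\<gamma>0 * (s/2) \<le> \<rho>" "\<rho> < s/2"
    and Q: "pcube \<rho> p1 \<subseteq> pcube (s/2) z" "pcube \<rho> p2 \<subseteq> pcube (s/2) z"
    and U: "U1 \<in> components (- S)" "U2 \<in> components (- S)" "U1 \<noteq> U2"
    and QU: "pcube \<rho> p1 \<inter> {q. in_time_range S (snd q)} \<subseteq> U1"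
      "pcube \<rho> p2 \<inter> {q. in_time_range S (snd q)} \<subseteq> U2"
    unfolding two_cube_at_def by blast
  have "0 < \<gamma>0 * s" using \<gamma>0 s(1) by simp
  then have \<rho>0: "0 < \<rho>" and h: "0 < \<gamma>0/32 * s" "8 * (\<gamma>0/32 * s) < \<rho>" "\<rho> \<le> s/2"
    using \<rho> by linarith+
  have "pcube (\<rho>/4) (fst p1, snd z) \<subseteq> U1 \<and> pcube (\<rho>/4) (fst p2, snd z) \<subseteq> U2"
    using Q QU half rng by (intro synchronized_cubes_subset_components[OF flat a h U]) blast+
  moreover have "pcube (\<rho>/4) (fst p1, snd z) \<subseteq> pcube s z" "pcube (\<rho>/4) (fst p2, snd z) \<subseteq> pcube s z"
    using pcube_time_shift_subset[OF Q(1), of "\<rho>/4"] pcube_time_shift_subset[OF Q(2), of "\<rho>/4"]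
      \<rho>0 h(3) half by auto
  moreover have "\<gamma>0/8 * s \<le> \<rho>/4" "\<rho>/4 < s" using \<rho> s(1) by linarith+
  ultimately show ?thesis
    using U by (intro two_cube_atI[where \<rho> = "\<rho>/4" and x = "(fst p1, snd z)"
        and y = "(fst p2, snd z)" and U = U1 and V = U2]) auto
qed

lemma exists_flat_scale:
  fixes S :: "'n::finite ppoint set"
  assumes M: "0 < M" and S: "closed S" "parabolic_UR M Mt S"
    and p: "p \<in> S" and r: "0 < r" "ennreal r < pdiam S"
    and T: "T0 S < ereal (snd p - r\<^sup>2/2)" "ereal (snd p + r\<^sup>2/2) < T1 S"
    and e: "0 < e" "e \<le> 1"
  shows "\<exists>z s a b. z \<in> S \<and> carleson_depth M Mt (beta_threshold CARD('n) M e) * r \<le> s \<and>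
    0 < s \<and> s \<le> r/4 \<and> ennreal s < pdiam S \<and> pcube s z \<subseteq> pcube r p \<and>
    (\<forall>q\<in>pcube s z. in_time_range S (snd q)) \<and>
    norm a = 1 \<and> (\<forall>q\<in>S \<inter> pcube (s/2) z. \<bar>a \<bullet> fst q - b\<bar> \<le> e * s)"
proof -
  define \<eta> where "\<eta> = beta_threshold CARD('n) M e"
  have \<eta>: "0 < \<eta>" using M e by (simp add: \<eta>_def beta_threshold_def)
  have ADR: "parabolic_ADR M S" using S(2) by (simp add: parabolic_UR_def)
  have r2: "0 < r/2" "ennreal (r/2) < pdiam S"
    using r by (auto intro: le_less_trans[OF ennreal_leI r(2)])
  have "nu_box S p (r/2) \<le> ennreal (Mt * (r/2) ^ (CARD('n) + 1))"
    using S(2) p r2 unfolding parabolic_UR_def by blast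
  moreover have "ennreal ((r/2) ^ (CARD('n) + 1) / M) \<le> emeasure (psigma S) (S \<inter> pcube (r/2) p)"
    using r2 by (intro emeasure_psigma_pcube_ge[OF S(1) ADR p] in_time_range_within[OF T]) auto
  ultimately obtain z s where z: "z \<in> S" "z \<in> pcube (r/2) p"
    and s: "carleson_depth M Mt \<eta> * r \<le> s" "s \<le> r/4" and small: "beta_sq S z s < ennreal \<eta>"
    using carleson_small_beta[OF S(1) M \<eta> r(1)] by blast
  have s0: "0 < s"
    using s(1) carleson_depth_pos[of M Mt \<eta>] r(1) by (meson less_le_trans mult_pos_pos)
  have spd: "ennreal s < pdiam S" using s r by (intro le_less_trans[OF ennreal_leI r(2)]) auto
  have rng: "\<forall>q\<in>pcube s z. in_time_range S (snd q)"
  proof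
    fix q assume "q \<in> pcube s z"
    then have "\<bar>snd q - snd z\<bar> < s\<^sup>2" by (simp add: mem_pcube abs_minus_commute)
    moreover have "\<bar>snd z - snd p\<bar> < r\<^sup>2/4"
      using z(2) by (simp add: mem_pcube power_divide abs_minus_commute)
    moreover have "s\<^sup>2 \<le> r\<^sup>2/16" using s0 s(2) power_mono[of s "r/4" 2] by (simp add: power_divide)
    ultimately have "\<bar>snd q - snd p\<bar> \<le> r\<^sup>2/2" by linarith
    then show "in_time_range S (snd q)" by (rule in_time_range_within[OF T])
  qed
  moreover have "pcube s z \<subseteq> pcube r p"
    using z(2) s s0 by (intro pcube_subset_of_mem_half) auto
  moreover obtain a b where "norm a = 1" "\<forall>q\<in>S \<inter> pcube (s/2) z. \<bar>a \<bullet> fst q - b\<bar> \<le> e * s"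
    using flat_of_beta_sq_less[OF S(1) ADR M s0 spd rng e] small unfolding \<eta>_def by blast
  ultimately show ?thesis
    using z(1) s s0 spd unfolding \<eta>_def by blast
qed

lemma weak_ts_two_cube_of_corkscrew_UR:
  fixes S :: "'n::finite ppoint set" and M Mt \<gamma>0 :: real
  defines "\<delta> \<equiv> carleson_depth M Mt (beta_threshold CARD('n) M (\<gamma>0/32))"
  assumes M: "0 < M" and \<gamma>0: "0 < \<gamma>0" "\<gamma>0 < 1"
    and S: "closed S" "corkscrew \<gamma>0 S" "parabolic_UR M Mt S"
  shows "weak_ts_two_cube (\<gamma>0 * \<delta> / 8) S"
  unfolding weak_ts_two_cube_def two_cube_iff
proof (intro ballI allI impI)
  fix p r assume p: "p \<in> S" and "in_time_range S (snd p) \<and> 0 < r \<and> ennreal r < pdiam S"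
  then have r: "0 < r" "ennreal r < pdiam S" by auto
  show "two_cube_at True (\<gamma>0 * \<delta> / 8) S p r"
  proof (cases "T0 S < ereal (snd p - r\<^sup>2/2) \<and> ereal (snd p + r\<^sup>2/2) < T1 S")
    case True
    then have T: "T0 S < ereal (snd p - r\<^sup>2/2)" "ereal (snd p + r\<^sup>2/2) < T1 S" by auto
    have e: "0 < \<gamma>0/32" "\<gamma>0/32 \<le> 1" using \<gamma>0 by auto
    obtain z s a b where z: "z \<in> S" and s: "\<delta> * r \<le> s" "0 < s" "s \<le> r/4" "ennreal s < pdiam S"
      and zs: "pcube s z \<subseteq> pcube r p" and rng: "\<forall>q\<in>pcube s z. in_time_range S (snd q)"
      and a: "norm a = 1" and flat: "\<forall>q\<in>S \<inter> pcube (s/2) z. \<bar>a \<bullet> fst q - b\<bar> \<le> \<gamma>0/32 * s"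
      using exists_flat_scale[OF M S(1,3) p r T e] unfolding \<delta>_def by blast
    have "two_cube_at True (\<gamma>0/8) S z s"
      by (rule two_cube_at_sync_of_flat[OF \<gamma>0(1) S(2) z s(2,4) rng a flat])
    moreover have "\<gamma>0 * (\<delta> * r) \<le> \<gamma>0 * s"
      using s(1) \<gamma>0 by (intro mult_left_mono) auto
    then have "\<gamma>0 * \<delta> / 8 * r \<le> \<gamma>0/8 * s" by simp
    moreover have "s \<le> r" using s(3) r(1) by linarith
    ultimately show ?thesis
      by (rule two_cube_at_subcube[OF _ zs])
  next
    case False
    then have T: "ereal (snd p - r\<^sup>2/2) \<le> T0 S \<or> T1 S \<le> ereal (snd p + r\<^sup>2/2)"
      by (auto simp: not_less)
    have "two_cube_at False \<gamma>0 S p r"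
      using S(2) p \<open>in_time_range S (snd p) \<and> _\<close> unfolding corkscrew_def two_cube_iff by blast
    then obtain U1 U2 where U: "U1 \<in> components (- S)" "U2 \<in> components (- S)" "U1 \<noteq> U2"
      using two_cube_at_imp_components by blast
    have "0 \<le> \<delta>" "\<delta> \<le> 1/4"
      unfolding \<delta>_def by (rule less_imp_le[OF carleson_depth_pos], rule carleson_depth_le)
    then have "\<gamma>0 * \<delta> \<le> 1 * (1/4)"
      using \<gamma>0 by (intro mult_mono) auto
    then have "\<gamma>0 * \<delta> / 8 \<le> 1/2" by linarith
    then show ?thesis
      by (rule two_cube_at_near_time_boundary[OF r(1) _ U T])
  qed
qed

theorem theorem3p2:
  fixes M Mt \<gamma>0 :: real
  assumes "0 < M" and "0 < \<gamma>0" and "\<gamma>0 < 1"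
  shows "\<exists>\<gamma>1. 0 < \<gamma>1 \<and> \<gamma>1 < 1 \<and>
    (\<forall>S :: ('n::finite) ppoint set.
       closed S \<and> parabolic_ADR M S \<and> corkscrew \<gamma>0 S \<and> parabolic_UR M Mt S
       \<longrightarrow> weak_ts_two_cube \<gamma>1 S)"
proof -
  (* parabolic_ADR M S is part of parabolic_UR M Mt S *)
  define \<delta> where "\<delta> = carleson_depth M Mt (beta_threshold CARD('n) M (\<gamma>0/32))"
  have "0 < \<delta>" "\<delta> \<le> 1/4"
    unfolding \<delta>_def by (rule carleson_depth_pos, rule carleson_depth_le)
  then have "\<gamma>0 * \<delta> \<le> 1 * (1/4)"
    using assms(2,3) by (intro mult_mono) auto
  then have "0 < \<gamma>0 * \<delta> / 8" "\<gamma>0 * \<delta> / 8 < 1"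
    using assms(2) \<open>0 < \<delta>\<close> by (simp, linarith)
  moreover note weak_ts_two_cube_of_corkscrew_UR[OF assms, of _ Mt]
  ultimately show ?thesis
    unfolding \<delta>_def by blast
qed

end
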